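(* For $k=1,\dots,s-1$, assume the following quantity is defined (denominator nonzero): $$r_k:=\frac{\alpha_k-\beta_k}{h_{k+1}\beta_k-h_{k-1}\alpha_k}.$$ Set $r_0:=P_{\max}$ and $r_s:=0$, and suppose $$0=r_s<r_{s-1}<\cdots<r_1<r_0=P_{\max}.$$ Then the KKT system described in the context has a unique solution. In that solution $I_k=r_k$ for all $k\in\{1,\dots,s-1\}$ and $\lambda_k=0$ for all $k$. Moreover, the optimal power allocation of problem (P) is $I^{**}_k=r_k$ for all $k\in\{1,\dots,s-1\}$.
   Context: Parameters: - $s\ge 2$, $P_{\max}>0$, and positive reals $h_0<h_1<\cdots<h_s$. - Probabilities $\delta_0,\dots,\delta_s$ summing to $1$. - $\theta_k:=\sum_{j=0}^{k-1}\delta_j$ and $\Delta_k:=\theta_k(1-\theta_k)$ for $k=1,\dots,s$. - $\alpha_k:=(h_{k+1}-h_k)\Delta_{k+1}$ and $\beta_k:=(h_k-h_{k-1})\Delta_k$ for $k=1,\dots,s-1$. Problem (P). The variables are $I_1,\dots,I_{s-1}$, with the conventions $I_0:=P_{\max}$ and $I_s:=0$. Maximize $$f(I)=\sum_{i=1}^s\Delta_i\,\frac L2\log\Big(\frac{1+h_iI_{i-1}}{1+h_iI_i}\cdot\frac{1+h_{i-1}I_i}{1+h_{i-1}I_{i-1}}\Big)$$ subject to $I_k\le I_{k-1}$ for all $k=1,\dots,s$. This is the power-allocation problem with $I_k=\sum_{j>k}P_j$. KKT system. Define the Lagrangian $$\mathcal L(I,\lambda)=-f(I)+\sum_{i=1}^s\lambda_i(I_i-I_{i-1}).$$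 The system asks for $(I_1,\dots,I_{s-1},\lambda_1,\dots,\lambda_s)$ such that: - $\partial\mathcal L/\partial I_k=0$ for $k=1,\dots,s-1$, - $\lambda_k(I_k-I_{k-1})=0$, $I_k\le I_{k-1}$ and $\lambda_k\ge0$ for $k=1,\dots,s$. *)

theory Defs
  imports Complex_Main
begin

definition ext :: "real \<Rightarrow> nat \<Rightarrow> (nat \<Rightarrow> real) \<Rightarrow> nat \<Rightarrow> real" where
  "ext Pmax s I k = (if k = 0 then Pmax else if k \<ge> s then 0 else I k)"

definition theta :: "(nat \<Rightarrow> real) \<Rightarrow> nat \<Rightarrow> real" where
  "theta \<delta> k = (\<Sum>j<k. \<delta> j)"

definition Delta :: "(nat \<Rightarrow> real) \<Rightarrow> nat \<Rightarrow> real" where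
  "Delta \<delta> k = theta \<delta> k * (1 - theta \<delta> k)"

definition alpha :: "(nat \<Rightarrow> real) \<Rightarrow> (nat \<Rightarrow> real) \<Rightarrow> nat \<Rightarrow> real" where
  "alpha h \<delta> k = (h (k+1) - h k) * Delta \<delta> (k+1)"

definition beta :: "(nat \<Rightarrow> real) \<Rightarrow> (nat \<Rightarrow> real) \<Rightarrow> nat \<Rightarrow> real" where
  "beta h \<delta> k = (h k - h (k-1)) * Delta \<delta> k"

definition rr :: "(nat \<Rightarrow> real) \<Rightarrow> (nat \<Rightarrow> real) \<Rightarrow> nat \<Rightarrow> real" where
  "rr h \<delta> k = (alpha h \<delta> k - beta h \<delta> k) /
     (h (k+1) * beta h \<delta> k - h (k-1) * alpha h \<delta> k)"

text \<open>Objective f of problem (P); I is given on indices 1..s-1.\<close>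
definition objective ::
  "real \<Rightarrow> (nat \<Rightarrow> real) \<Rightarrow> (nat \<Rightarrow> real) \<Rightarrow> real \<Rightarrow> nat \<Rightarrow> (nat \<Rightarrow> real) \<Rightarrow> real" where
  "objective L h \<delta> Pmax s I =
     (\<Sum>i=1..s. Delta \<delta> i * (L / 2) *
        ln ((1 + h i * ext Pmax s I (i-1)) / (1 + h i * ext Pmax s I i) *
            ((1 + h (i-1) * ext Pmax s I i) / (1 + h (i-1) * ext Pmax s I (i-1)))))"

definition feasible :: "real \<Rightarrow> nat \<Rightarrow> (nat \<Rightarrow> real) \<Rightarrow> bool" where
  "feasible Pmax s I = (\<forall>k\<in>{1..s}. ext Pmax s I k \<le> ext Pmax s I (k-1))"

definition lagrangian ::
  "real \<Rightarrow> (nat \<Rightarrow> real) \<Rightarrow> (nat \<Rightarrow> real) \<Rightarrow> real \<Rightarrow> nat \<Rightarrow> (nat \<Rightarrow> real) \<Rightarrow> (nat \<Rightarrow> real) \<Rightarrow> real" where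
  "lagrangian L h \<delta> Pmax s I lam =
     - objective L h \<delta> Pmax s I +
     (\<Sum>i=1..s. lam i * (ext Pmax s I i - ext Pmax s I (i-1)))"

definition KKT ::
  "real \<Rightarrow> (nat \<Rightarrow> real) \<Rightarrow> (nat \<Rightarrow> real) \<Rightarrow> real \<Rightarrow> nat \<Rightarrow> (nat \<Rightarrow> real) \<Rightarrow> (nat \<Rightarrow> real) \<Rightarrow> bool" where
  "KKT L h \<delta> Pmax s I lam =
    ((\<forall>k\<in>{1..s-1}.
        ((\<lambda>t. lagrangian L h \<delta> Pmax s (I(k := t)) lam) has_real_derivative 0) (at (I k))) \<and>
     (\<forall>k\<in>{1..s}. lam k * (ext Pmax s I k - ext Pmax s I (k-1)) = 0 \<and>
                 ext Pmax s I k \<le> ext Pmax s I (k-1) \<and> lam k \<ge> 0))"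

end

theory Submission
  imports Defs
begin

text \<open>
  With psi_i(x) = Delta_i (ln (1 + h_i x) - ln (1 + h_{i-1} x)) (layer_rate), the objective telescopes
  to L/2 (psi_1(Pmax) - psi_s(0) + sum_k G_k(I_k)) with G_k = psi_{k+1} - psi_k (coord_gain), so
  problem (P) and its Lagrangian separate in the coordinates. On x >= 0 the derivative G_k'(x) is a
  positive multiple of r_k - x, so G_k has its strict maximum at r_k and the feasible point r is the
  unique maximizer.

  Stationarity reads lambda_k - lambda_{k+1} = L/2 G_k'(I_k). Together with complementary slackness,
  a positive multiplier lambda_m forces I_{m-1} < r_{m-1} (backward induction from m = s), whereas
  I_{m-1} < r_{m-1} forces lambda_m = 0 (forward induction from m = 1). Hence all multipliers vanish,
  G_k'(I_k) = 0 and I_k = r_k.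
\<close>

lemma ln_gain_combination_has_derivative:
  fixes a b c P Q D x :: real
  assumes pos: "0 < 1 + a * x" "0 < 1 + b * x" "0 < 1 + c * x"
    and D: "D = a * ((b - c) * Q) - c * ((a - b) * P)" "D \<noteq> 0"
  shows "((\<lambda>x. P * (ln (1 + a * x) - ln (1 + b * x)) - Q * (ln (1 + b * x) - ln (1 + c * x)))
    has_real_derivative D * (((a - b) * P - (b - c) * Q) / D - x) / ((1 + a * x) * (1 + b * x) * (1 + c * x)))
    (at x)"
proof -
  have ln_deriv: "((\<lambda>x. ln (1 + e * x)) has_real_derivative e / (1 + e * x)) (at x)"
    if "0 < 1 + e * x" for e
    using that by (auto intro!: derivative_eq_intros)
  define A B C where "A = 1 + a * x" and "B = 1 + b * x" and "C = 1 + c * x"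
  have "A \<noteq> 0" "B \<noteq> 0" "C \<noteq> 0" using pos unfolding A_def B_def C_def by auto
  then have "P * (a / A - b / B) - Q * (b / B - c / C)
      = (P * (a * B - b * A) * C - Q * (b * C - c * B) * A) / (A * B * C)"
    by (simp add: field_simps)
  also have "P * (a * B - b * A) * C - Q * (b * C - c * B) * A = (a - b) * P - (b - c) * Q - D * x"
    unfolding A_def B_def C_def D(1) by algebra
  also have "\<dots> = D * (((a - b) * P - (b - c) * Q) / D - x)"
    using D(2) by (simp add: right_diff_distrib[of D _ x])
  finally have value_eq: "P * (a / A - b / B) - Q * (b / B - c / C)
      = D * (((a - b) * P - (b - c) * Q) / D - x) / (A * B * C)" .
  have "((\<lambda>x. P * (ln (1 + a * x) - ln (1 + b * x)) - Q * (ln (1 + b * x) - ln (1 + c * x)))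
    has_real_derivative P * (a / A - b / B) - Q * (b / B - c / C)) (at x)"
    unfolding A_def B_def C_def using pos by (intro DERIV_diff DERIV_cmult ln_deriv)
  then show ?thesis unfolding value_eq unfolding A_def B_def C_def .
qed

lemma strict_max_if_deriv_sign:
  fixes f f' :: "real \<Rightarrow> real"
  assumes deriv: "\<And>y. l \<le> y \<Longrightarrow> (f has_real_derivative f' y) (at y)"
    and sign: "\<And>y. l \<le> y \<Longrightarrow> sgn (f' y) = sgn (r - y)"
    and "l \<le> r" "l \<le> x" "x \<noteq> r"
  shows "f x < f r"
proof -
  have cont: "continuous_on {u..v} f" if "l \<le> u" for u v
    using deriv that by (intro DERIV_continuous_on[where D = f']) (auto intro: has_field_derivative_at_within)
  show ?thesis
  proof (cases "x < r")
    case True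
    show ?thesis
    proof (rule DERIV_pos_imp_increasing_open[OF True _ cont[OF \<open>l \<le> x\<close>]])
      fix y assume "x < y" "y < r"
      with \<open>l \<le> x\<close> have "l \<le> y" by simp
      then have "0 < f' y"
        using sign[of y] \<open>y < r\<close> sgn_greater[of "f' y"] sgn_greater[of "r - y"] by simp
      then show "\<exists>d. DERIV f y :> d \<and> 0 < d" using deriv[OF \<open>l \<le> y\<close>] by blast
    qed
  next
    case False
    then have "r < x" using \<open>x \<noteq> r\<close> by simp
    show ?thesis
    proof (rule DERIV_neg_imp_decreasing_open[OF \<open>r < x\<close> _ cont[OF \<open>l \<le> r\<close>]])
      fix y assume "r < y" "y < x"
      with \<open>l \<le> r\<close> have "l \<le> y" by simp
      then have "f' y < 0"
        using sign[of y] \<open>r < y\<close> sgn_less[of "f' y"] sgn_less[of "r - y"] by simp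
      then show "\<exists>d. DERIV f y :> d \<and> d < 0" using deriv[OF \<open>l \<le> y\<close>] by blast
    qed
  qed
qed

lemma ratio_denominator_pos:
  fixes a c \<alpha> \<beta> :: real
  assumes "0 \<le> c" "c < a" "0 \<le> \<alpha>" "0 < (\<alpha> - \<beta>) / (a * \<beta> - c * \<alpha>)"
  shows "0 < a * \<beta> - c * \<alpha>"
proof (rule ccontr)
  assume "\<not> ?thesis"
  with assms(4) have "a * \<beta> - c * \<alpha> < 0" "\<alpha> < \<beta>"
    by (auto simp: zero_less_divide_iff)
  moreover have "c * \<alpha> \<le> c * \<beta>"
    using \<open>\<alpha> < \<beta>\<close> assms(1) by (simp add: mult_left_mono)
  moreover have "0 < (a - c) * \<beta>"
    using \<open>\<alpha> < \<beta>\<close> assms(2,3) by simp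
  ultimately show False by (simp add: algebra_simps)
qed

lemma sum_shifted_diff:
  fixes a b :: "nat \<Rightarrow> 'a::ab_group_add"
  assumes "1 \<le> s"
  shows "(\<Sum>i=1..s. a (i - 1) - b i) = a 0 - b s + (\<Sum>k=1..s-1. a k - b k)"
proof -
  obtain m where s: "s = Suc m" using assms by (cases s) auto
  have "(\<Sum>i=1..s. a (i - 1)) = a 0 + (\<Sum>k=1..s-1. a k)"
    unfolding s One_nat_def sum.shift_bounds_cl_Suc_ivl by (simp add: sum.atLeast_Suc_atMost)
  moreover have "(\<Sum>i=1..s. b i) = (\<Sum>k=1..s-1. b k) + b s"
    unfolding s by simp
  ultimately show ?thesis by (simp add: sum_subtractf)
qed

lemma ext_fun_upd:
  assumes "1 \<le> k" "k < s"
  shows "ext Pmax s (I(k := t)) = (ext Pmax s I)(k := t)"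
  using assms by (auto simp: ext_def fun_eq_iff)

lemma feasible_if_KKT: "KKT L h \<delta> Pmax s I lam \<Longrightarrow> feasible Pmax s I"
  by (auto simp: KKT_def feasible_def)

lemma decseq_ext_if_feasible:
  assumes "feasible Pmax s I" "1 \<le> s"
  shows "decseq (ext Pmax s I)"
  unfolding decseq_Suc_iff
proof
  fix n
  show "ext Pmax s I (Suc n) \<le> ext Pmax s I n"
  proof (cases "Suc n \<le> s")
    case True
    then have "Suc n \<in> {1..s}" by simp
    then have "ext Pmax s I (Suc n) \<le> ext Pmax s I (Suc n - 1)"
      using assms(1) unfolding feasible_def by blast
    then show ?thesis by simp
  next
    case False
    then show ?thesis using assms(2) by (simp add: ext_def)
  qed
qed

lemma ext_nonneg_if_feasible:
  assumes "feasible Pmax s I" "1 \<le> s"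
  shows "0 \<le> ext Pmax s I j"
proof -
  have "ext Pmax s I (j + s) \<le> ext Pmax s I j"
    using decseq_ext_if_feasible[OF assms] by (simp add: decseqD)
  then show ?thesis using assms(2) by (simp add: ext_def)
qed

definition layer_rate :: "(nat \<Rightarrow> real) \<Rightarrow> (nat \<Rightarrow> real) \<Rightarrow> nat \<Rightarrow> real \<Rightarrow> real" where
  "layer_rate h \<delta> i x = Delta \<delta> i * (ln (1 + h i * x) - ln (1 + h (i - 1) * x))"

definition coord_gain :: "(nat \<Rightarrow> real) \<Rightarrow> (nat \<Rightarrow> real) \<Rightarrow> nat \<Rightarrow> real \<Rightarrow> real" where
  "coord_gain h \<delta> k x = layer_rate h \<delta> (k + 1) x - layer_rate h \<delta> k x"

definition coord_gain_deriv :: "(nat \<Rightarrow> real) \<Rightarrow> (nat \<Rightarrow> real) \<Rightarrow> nat \<Rightarrow> real \<Rightarrow> real" where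
  "coord_gain_deriv h \<delta> k x =
     (h (k + 1) * beta h \<delta> k - h (k - 1) * alpha h \<delta> k) * (rr h \<delta> k - x)
     / ((1 + h (k + 1) * x) * (1 + h k * x) * (1 + h (k - 1) * x))"

lemma objective_separable:
  assumes "1 \<le> s" and pos: "\<And>a j. a \<le> s \<Longrightarrow> j \<le> s \<Longrightarrow> 0 < 1 + h a * ext Pmax s I j"
  shows "objective L h \<delta> Pmax s I =
    L / 2 * (layer_rate h \<delta> 1 Pmax - layer_rate h \<delta> s 0 + (\<Sum>k=1..s-1. coord_gain h \<delta> k (I k)))"
proof -
  let ?e = "ext Pmax s I"
  have "objective L h \<delta> Pmax s I =
      L / 2 * (\<Sum>i=1..s. layer_rate h \<delta> (i - 1 + 1) (?e (i - 1)) - layer_rate h \<delta> i (?e i))"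
    unfolding objective_def sum_distrib_left
  proof (rule sum.cong)
    fix i assume i: "i \<in> {1..s}"
    let ?A = "1 + h i * ?e (i - 1)" and ?B = "1 + h i * ?e i"
      and ?C = "1 + h (i - 1) * ?e i" and ?D = "1 + h (i - 1) * ?e (i - 1)"
    have factors_pos: "0 < ?A" "0 < ?B" "0 < ?C" "0 < ?D"
      using i pos[of i] pos[of "i - 1"] by auto
    show "Delta \<delta> i * (L / 2) * ln (?A / ?B * (?C / ?D))
      = L / 2 * (layer_rate h \<delta> (i - 1 + 1) (?e (i - 1)) - layer_rate h \<delta> i (?e i))"
      unfolding ln_mult_pos[OF divide_pos_pos divide_pos_pos, OF factors_pos]
        ln_divide_pos[OF factors_pos(1,2)] ln_divide_pos[OF factors_pos(3,4)]
      using i by (simp add: layer_rate_def algebra_simps)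
  qed simp
  also have "\<dots> = L / 2 * (layer_rate h \<delta> 1 (?e 0) - layer_rate h \<delta> s (?e s)
      + (\<Sum>k=1..s-1. coord_gain h \<delta> k (?e k)))"
    using sum_shifted_diff[OF assms(1), of "\<lambda>j. layer_rate h \<delta> (j + 1) (?e j)" "\<lambda>i. layer_rate h \<delta> i (?e i)"]
    by (simp add: coord_gain_def)
  also have "(\<Sum>k=1..s-1. coord_gain h \<delta> k (?e k)) = (\<Sum>k=1..s-1. coord_gain h \<delta> k (I k))"
    by (rule sum.cong) (auto simp: ext_def)
  finally show ?thesis using assms(1) by (simp add: ext_def)
qed

lemma penalty_separable:
  assumes "1 \<le> s"
  shows "(\<Sum>i=1..s. lam i * (ext Pmax s I i - ext Pmax s I (i - 1)))
    = (\<Sum>k=1..s-1. (lam k - lam (k + 1)) * I k) - lam 1 * Pmax"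
proof -
  let ?e = "ext Pmax s I"
  have "(\<Sum>i=1..s. lam i * (?e i - ?e (i - 1)))
      = - (\<Sum>i=1..s. lam (i - 1 + 1) * ?e (i - 1) - lam i * ?e i)"
    by (simp add: sum_negf[symmetric] algebra_simps)
  also have "\<dots> = (\<Sum>k=1..s-1. (lam k - lam (k + 1)) * ?e k) - lam 1 * Pmax"
    using sum_shifted_diff[OF assms, of "\<lambda>j. lam (j + 1) * ?e j" "\<lambda>i. lam i * ?e i"] assms
    by (simp add: ext_def sum_negf[symmetric] algebra_simps)
  also have "(\<Sum>k=1..s-1. (lam k - lam (k + 1)) * ?e k) = (\<Sum>k=1..s-1. (lam k - lam (k + 1)) * I k)"
    by (rule sum.cong) (auto simp: ext_def)
  finally show ?thesis .
qed

lemma lagrangian_separable: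
  assumes "1 \<le> s" and "\<And>a j. a \<le> s \<Longrightarrow> j \<le> s \<Longrightarrow> 0 < 1 + h a * ext Pmax s I j"
  shows "lagrangian L h \<delta> Pmax s I lam =
    - L / 2 * (layer_rate h \<delta> 1 Pmax - layer_rate h \<delta> s 0) - lam 1 * Pmax
    + (\<Sum>k=1..s-1. (lam k - lam (k + 1)) * I k - L / 2 * coord_gain h \<delta> k (I k))"
proof -
  have obj: "objective L h \<delta> Pmax s I =
      L / 2 * (layer_rate h \<delta> 1 Pmax - layer_rate h \<delta> s 0 + (\<Sum>k=1..s-1. coord_gain h \<delta> k (I k)))"
    by (rule objective_separable[OF assms])
  have "(\<Sum>k=1..s-1. (lam k - lam (k + 1)) * I k - L / 2 * coord_gain h \<delta> k (I k))
      = (\<Sum>k=1..s-1. (lam k - lam (k + 1)) * I k) - L / 2 * (\<Sum>k=1..s-1. coord_gain h \<delta> k (I k))"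
    by (simp add: sum_subtractf sum_distrib_left)
  then show ?thesis
    unfolding lagrangian_def obj penalty_separable[OF assms(1)] by (simp add: algebra_simps)
qed

locale power_allocation =
  fixes s :: nat and Pmax L :: real and h \<delta> :: "nat \<Rightarrow> real"
  assumes two_le_s: "2 \<le> s" and L_pos: "0 < L"
    and h0_pos: "0 < h 0" and h_increasing: "\<And>k. k < s \<Longrightarrow> h k < h (k + 1)"
    and \<delta>_nonneg: "\<And>j. j \<le> s \<Longrightarrow> 0 \<le> \<delta> j" and \<delta>_sum: "(\<Sum>j\<le>s. \<delta> j) = 1"
    and rr_denominator_nonzero:
      "\<And>k. k \<in> {1..s-1} \<Longrightarrow> h (k + 1) * beta h \<delta> k - h (k - 1) * alpha h \<delta> k \<noteq> 0"
    and rr_strictly_decreasing: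
      "\<And>k. k \<in> {1..s} \<Longrightarrow> ext Pmax s (rr h \<delta>) k < ext Pmax s (rr h \<delta>) (k - 1)"
begin

lemma h_nonneg: "a \<le> s \<Longrightarrow> 0 \<le> h a"
proof (induction a)
  case 0
  then show ?case using h0_pos by simp
next
  case (Suc a)
  then show ?case using h_increasing[of a] by simp
qed

lemma one_plus_h_pos: "a \<le> s \<Longrightarrow> 0 \<le> x \<Longrightarrow> 0 < 1 + h a * x"
  using h_nonneg by (simp add: add_pos_nonneg)

lemma Delta_nonneg: "k \<le> s \<Longrightarrow> 0 \<le> Delta \<delta> k"
proof -
  assume "k \<le> s"
  have "0 \<le> theta \<delta> k"
    unfolding theta_def using \<delta>_nonneg \<open>k \<le> s\<close> by (auto intro: sum_nonneg)
  moreover have "theta \<delta> k \<le> 1"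
    unfolding theta_def \<delta>_sum[symmetric] using \<delta>_nonneg \<open>k \<le> s\<close> by (intro sum_mono2) auto
  ultimately show ?thesis unfolding Delta_def by simp
qed

lemma feasible_rr: "feasible Pmax s (rr h \<delta>)"
  unfolding feasible_def using rr_strictly_decreasing less_imp_le by blast

lemma rr_pos: "k \<in> {1..s-1} \<Longrightarrow> 0 < rr h \<delta> k"
  using rr_strictly_decreasing[of "k + 1"] ext_nonneg_if_feasible[OF feasible_rr, of "k + 1"] two_le_s
  by (auto simp: ext_def split: if_splits)

lemma rr_denominator_pos:
  assumes k: "k \<in> {1..s-1}"
  shows "0 < h (k + 1) * beta h \<delta> k - h (k - 1) * alpha h \<delta> k"
proof (rule ratio_denominator_pos)
  show "0 \<le> h (k - 1)" using k by (intro h_nonneg) auto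
  have "k < s" "k - 1 < s" using k by auto
  then show "h (k - 1) < h (k + 1)"
    using k h_increasing[of "k - 1"] h_increasing[of k] by simp
  show "0 \<le> alpha h \<delta> k"
    unfolding alpha_def using \<open>k < s\<close> h_increasing[of k] Delta_nonneg[of "k + 1"]
    by (auto intro!: mult_nonneg_nonneg)
  show "0 < (alpha h \<delta> k - beta h \<delta> k) / (h (k + 1) * beta h \<delta> k - h (k - 1) * alpha h \<delta> k)"
    using rr_pos[OF k] by (simp add: rr_def)
qed

lemma coord_gain_has_derivative:
  assumes "k \<in> {1..s-1}" "0 \<le> x"
  shows "(coord_gain h \<delta> k has_real_derivative coord_gain_deriv h \<delta> k x) (at x)"
proof -
  have "coord_gain h \<delta> k = (\<lambda>x. Delta \<delta> (k + 1) * (ln (1 + h (k + 1) * x) - ln (1 + h k * x))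
      - Delta \<delta> k * (ln (1 + h k * x) - ln (1 + h (k - 1) * x)))"
    by (simp add: fun_eq_iff coord_gain_def layer_rate_def)
  then show ?thesis
    using assms rr_denominator_nonzero[OF assms(1)]
    unfolding coord_gain_deriv_def rr_def alpha_def beta_def
    by (auto intro!: ln_gain_combination_has_derivative one_plus_h_pos)
qed

lemma sgn_coord_gain_deriv:
  assumes "k \<in> {1..s-1}" "0 \<le> x"
  shows "sgn (coord_gain_deriv h \<delta> k x) = sgn (rr h \<delta> k - x)"
proof -
  have "0 < 1 + h (k + 1) * x" "0 < 1 + h k * x" "0 < 1 + h (k - 1) * x"
    using assms by (auto intro!: one_plus_h_pos)
  then show ?thesis
    using rr_denominator_pos[OF assms(1)] by (simp add: coord_gain_deriv_def sgn_mult)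
qed

lemma coord_gain_deriv_pos_iff:
  assumes "k \<in> {1..s-1}" "0 \<le> x"
  shows "0 < coord_gain_deriv h \<delta> k x \<longleftrightarrow> x < rr h \<delta> k"
  using sgn_coord_gain_deriv[OF assms] sgn_greater[of "coord_gain_deriv h \<delta> k x"]
    sgn_greater[of "rr h \<delta> k - x"] by simp

lemma coord_gain_deriv_eq_0_iff:
  assumes "k \<in> {1..s-1}" "0 \<le> x"
  shows "coord_gain_deriv h \<delta> k x = 0 \<longleftrightarrow> x = rr h \<delta> k"
  using sgn_coord_gain_deriv[OF assms] by (metis eq_iff_diff_eq_0 sgn_0_0)

lemma coord_gain_less_at_rr:
  assumes k: "k \<in> {1..s-1}" and "0 \<le> x" "x \<noteq> rr h \<delta> k"
  shows "coord_gain h \<delta> k x < coord_gain h \<delta> k (rr h \<delta> k)"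
  using coord_gain_has_derivative[OF k] sgn_coord_gain_deriv[OF k] less_imp_le[OF rr_pos[OF k]] assms(2,3)
  by (rule strict_max_if_deriv_sign)

lemma coord_gain_le_at_rr:
  "k \<in> {1..s-1} \<Longrightarrow> 0 \<le> x \<Longrightarrow> coord_gain h \<delta> k x \<le> coord_gain h \<delta> k (rr h \<delta> k)"
  using coord_gain_less_at_rr by (cases "x = rr h \<delta> k") (simp_all add: less_imp_le)

lemma I_nonneg_if_feasible: "feasible Pmax s I \<Longrightarrow> k \<in> {1..s-1} \<Longrightarrow> 0 \<le> I k"
  using ext_nonneg_if_feasible[of Pmax s I k] two_le_s by (auto simp: ext_def split: if_splits)

lemma objective_feasible:
  assumes "feasible Pmax s I"
  shows "objective L h \<delta> Pmax s I =
    L / 2 * (layer_rate h \<delta> 1 Pmax - layer_rate h \<delta> s 0 + (\<Sum>k=1..s-1. coord_gain h \<delta> k (I k)))"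
  using two_le_s ext_nonneg_if_feasible[OF assms]
  by (intro objective_separable) (auto intro: one_plus_h_pos)

lemma objective_le_rr:
  assumes "feasible Pmax s I"
  shows "objective L h \<delta> Pmax s I \<le> objective L h \<delta> Pmax s (rr h \<delta>)"
proof -
  have "(\<Sum>k=1..s-1. coord_gain h \<delta> k (I k)) \<le> (\<Sum>k=1..s-1. coord_gain h \<delta> k (rr h \<delta> k))"
    by (intro sum_mono coord_gain_le_at_rr I_nonneg_if_feasible[OF assms])
  then show ?thesis
    unfolding objective_feasible[OF assms] objective_feasible[OF feasible_rr] using L_pos by simp
qed

lemma maximizer_eq_rr:
  assumes "feasible Pmax s I" "objective L h \<delta> Pmax s (rr h \<delta>) \<le> objective L h \<delta> Pmax s I"
    and k: "k \<in> {1..s-1}"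
  shows "I k = rr h \<delta> k"
proof (rule ccontr)
  assume "I k \<noteq> rr h \<delta> k"
  have "(\<Sum>k=1..s-1. coord_gain h \<delta> k (I k)) < (\<Sum>k=1..s-1. coord_gain h \<delta> k (rr h \<delta> k))"
  proof (rule sum_strict_mono_ex1)
    show "\<forall>j\<in>{1..s-1}. coord_gain h \<delta> j (I j) \<le> coord_gain h \<delta> j (rr h \<delta> j)"
      by (intro ballI coord_gain_le_at_rr I_nonneg_if_feasible[OF assms(1)])
    show "\<exists>j\<in>{1..s-1}. coord_gain h \<delta> j (I j) < coord_gain h \<delta> j (rr h \<delta> j)"
      using k \<open>I k \<noteq> rr h \<delta> k\<close> I_nonneg_if_feasible[OF assms(1) k] coord_gain_less_at_rr by blast
  qed simp
  then have "objective L h \<delta> Pmax s I < objective L h \<delta> Pmax s (rr h \<delta>)"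
    unfolding objective_feasible[OF assms(1)] objective_feasible[OF feasible_rr] using L_pos by simp
  then show False using assms(2) by simp
qed

lemma lagrangian_coord_has_derivative:
  assumes k: "k \<in> {1..s-1}" and nonneg: "\<And>j. 0 \<le> ext Pmax s I j"
  shows "((\<lambda>t. lagrangian L h \<delta> Pmax s (I(k := t)) lam) has_real_derivative
    lam k - lam (k + 1) - L / 2 * coord_gain_deriv h \<delta> k (I k)) (at (I k))"
proof -
  define \<phi> where "\<phi> j t = (lam j - lam (j + 1)) * t - L / 2 * coord_gain h \<delta> j t" for j t
  define C where "C = - L / 2 * (layer_rate h \<delta> 1 Pmax - layer_rate h \<delta> s 0) - lam 1 * Pmax
    + (\<Sum>j\<in>{1..s-1} - {k}. \<phi> j (I j))"
  have k_bounds: "1 \<le> k" "k < s" using k two_le_s by auto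
  have Ik: "0 \<le> I k" using nonneg[of k] k_bounds by (simp add: ext_def)
  have "((\<lambda>t. 1 + h a * t) \<longlongrightarrow> 1 + h a * I k) (nhds (I k))" for a
    by (intro tendsto_intros filterlim_ident)
  then have "\<forall>\<^sub>F t in nhds (I k). \<forall>a\<in>{..s}. 0 < 1 + h a * t"
    using Ik by (intro eventually_ball_finite ballI order_tendstoD(1)) (auto intro: one_plus_h_pos)
  then have ev: "\<forall>\<^sub>F t in nhds (I k). lagrangian L h \<delta> Pmax s (I(k := t)) lam = C + \<phi> k t"
  proof eventually_elim
    case (elim t)
    have "0 < 1 + h a * ext Pmax s (I(k := t)) j" if "a \<le> s" for a j
      using elim that nonneg[of j] by (auto simp: ext_fun_upd[OF k_bounds] intro: one_plus_h_pos)
    then have "lagrangian L h \<delta> Pmax s (I(k := t)) lam =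
      - L / 2 * (layer_rate h \<delta> 1 Pmax - layer_rate h \<delta> s 0) - lam 1 * Pmax
      + (\<Sum>j=1..s-1. \<phi> j ((I(k := t)) j))"
      using k_bounds unfolding \<phi>_def by (intro lagrangian_separable) auto
    also have "(\<Sum>j=1..s-1. \<phi> j ((I(k := t)) j)) = \<phi> k t + (\<Sum>j\<in>{1..s-1} - {k}. \<phi> j (I j))"
      using k by (simp add: sum.remove)
    finally show ?case unfolding C_def by (simp add: fun_upd_def ac_simps)
  qed
  moreover have "((\<lambda>t. C + \<phi> k t) has_real_derivative
      lam k - lam (k + 1) - L / 2 * coord_gain_deriv h \<delta> k (I k)) (at (I k))"
    unfolding \<phi>_def using coord_gain_has_derivative[OF k Ik]
    by (auto intro!: derivative_eq_intros)
  ultimately show ?thesis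
    using DERIV_cong_ev[OF refl ev refl] by simp
qed

lemma KKT_stationarity:
  assumes "KKT L h \<delta> Pmax s I lam" "k \<in> {1..s-1}"
  shows "lam k - lam (k + 1) = L / 2 * coord_gain_deriv h \<delta> k (I k)"
proof -
  have "((\<lambda>t. lagrangian L h \<delta> Pmax s (I(k := t)) lam) has_real_derivative 0) (at (I k))"
    using assms unfolding KKT_def by blast
  moreover have "\<And>j. 0 \<le> ext Pmax s I j"
    using ext_nonneg_if_feasible[OF feasible_if_KKT[OF assms(1)]] two_le_s by simp
  ultimately have "lam k - lam (k + 1) - L / 2 * coord_gain_deriv h \<delta> k (I k) = 0"
    using DERIV_unique lagrangian_coord_has_derivative[OF assms(2)] by blast
  then show ?thesis by simp
qed

lemma KKT_rr: "KKT L h \<delta> Pmax s (rr h \<delta>) (\<lambda>_. 0)"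
proof -
  have "((\<lambda>t. lagrangian L h \<delta> Pmax s ((rr h \<delta>)(k := t)) (\<lambda>_. 0)) has_real_derivative 0) (at (rr h \<delta> k))"
    if k: "k \<in> {1..s-1}" for k
    using lagrangian_coord_has_derivative[OF k, of "rr h \<delta>" "\<lambda>_. 0"] rr_pos[OF k]
      ext_nonneg_if_feasible[OF feasible_rr] two_le_s
    by (simp add: coord_gain_deriv_def)
  then show ?thesis
    using feasible_rr unfolding KKT_def feasible_def by auto
qed

context
  fixes I lam assumes kkt: "KKT L h \<delta> Pmax s I lam"
begin

lemma KKT_multiplier_nonneg: "m \<in> {1..s} \<Longrightarrow> 0 \<le> lam m"
  using kkt unfolding KKT_def by blast

lemma KKT_slackness:
  assumes "m \<in> {1..s}" "0 < lam m"
  shows "ext Pmax s I m = ext Pmax s I (m - 1)"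
proof -
  have "lam m * (ext Pmax s I m - ext Pmax s I (m - 1)) = 0"
    using kkt assms(1) unfolding KKT_def by blast
  then show ?thesis using assms(2) by simp
qed

lemma KKT_I_nonneg: "k \<in> {1..s-1} \<Longrightarrow> 0 \<le> I k"
  using I_nonneg_if_feasible[OF feasible_if_KKT[OF kkt]] .

lemma KKT_multiplier_zero_below_rr:
  "m \<in> {1..s} \<Longrightarrow> ext Pmax s I (m - 1) < ext Pmax s (rr h \<delta>) (m - 1) \<Longrightarrow> lam m = 0"
proof (induction m)
  case 0
  then show ?case by simp
next
  case (Suc n)
  show ?case
  proof (cases "n = 0")
    case True
    then show ?thesis using Suc.prems by (simp add: ext_def)
  next
    case False
    then have n: "n \<in> {1..s-1}" using Suc.prems by auto
    have I_n: "ext Pmax s I n = I n" and rr_n: "ext Pmax s (rr h \<delta>) n = rr h \<delta> n"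
      using n by (auto simp: ext_def)
    show ?thesis
    proof (rule ccontr)
      assume "lam (Suc n) \<noteq> 0"
      then have "0 < lam (Suc n)" using KKT_multiplier_nonneg[OF Suc.prems(1)] by simp
      have "0 < coord_gain_deriv h \<delta> n (I n)"
        using Suc.prems I_n rr_n coord_gain_deriv_pos_iff[OF n KKT_I_nonneg[OF n]] by simp
      then have "0 < L / 2 * coord_gain_deriv h \<delta> n (I n)" using L_pos by simp
      with \<open>0 < lam (Suc n)\<close> have "0 < lam n" using KKT_stationarity[OF kkt n] by simp
      moreover have "ext Pmax s I (n - 1) < ext Pmax s (rr h \<delta>) (n - 1)"
        using KKT_slackness[of n] n \<open>0 < lam n\<close> Suc.prems I_n rr_n rr_strictly_decreasing[of n] by simp
      moreover have "n \<in> {1..s}" using n by auto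
      ultimately show False using Suc.IH by simp
    qed
  qed
qed

lemma KKT_below_rr_if_multiplier_pos:
  "m \<le> s \<Longrightarrow> 1 \<le> m \<Longrightarrow> 0 < lam m \<Longrightarrow> ext Pmax s I (m - 1) < ext Pmax s (rr h \<delta>) (m - 1)"
proof (induction m rule: inc_induct)
  case base
  show ?case
    using KKT_slackness[of s] base two_le_s rr_pos[of "s - 1"] by (auto simp: ext_def)
next
  case (step m)
  then have m: "m \<in> {1..s-1}" by auto
  have I_m: "ext Pmax s I m = I m" and rr_m: "ext Pmax s (rr h \<delta>) m = rr h \<delta> m"
    using m by (auto simp: ext_def)
  have "I m < rr h \<delta> m"
  proof (cases "0 < lam (m + 1)")
    case True
    then show ?thesis using step.IH I_m rr_m by simp
  next
    case False
    moreover have "m + 1 \<in> {1..s}" using m by auto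
    ultimately have "lam (m + 1) = 0" using KKT_multiplier_nonneg[of "m + 1"] by simp
    then have "0 < L / 2 * coord_gain_deriv h \<delta> m (I m)"
      using KKT_stationarity[OF kkt m] step.prems by simp
    then have "0 < coord_gain_deriv h \<delta> m (I m)"
      using L_pos by (simp add: zero_less_mult_iff)
    then show ?thesis using coord_gain_deriv_pos_iff[OF m KKT_I_nonneg[OF m]] by simp
  qed
  moreover have "m \<in> {1..s}" using m by auto
  ultimately show ?case
    using KKT_slackness step.prems I_m rr_m rr_strictly_decreasing[of m] by simp
qed

lemma KKT_multiplier_zero:
  assumes "m \<in> {1..s}"
  shows "lam m = 0"
proof (rule ccontr)
  assume "lam m \<noteq> 0"
  then have "0 < lam m" using KKT_multiplier_nonneg[OF assms] by simp
  then show False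
    using assms KKT_multiplier_zero_below_rr KKT_below_rr_if_multiplier_pos[of m] by simp
qed

lemma KKT_eq_rr:
  assumes k: "k \<in> {1..s-1}"
  shows "I k = rr h \<delta> k"
proof -
  have "lam k = 0" "lam (k + 1) = 0" using k by (auto intro!: KKT_multiplier_zero)
  then have "coord_gain_deriv h \<delta> k (I k) = 0" using KKT_stationarity[OF kkt k] L_pos by simp
  then show ?thesis using coord_gain_deriv_eq_0_iff[OF k KKT_I_nonneg[OF k]] by simp
qed

end

end

theorem lemma1:
  fixes s :: nat and Pmax L :: real and h \<delta> :: "nat \<Rightarrow> real"
  assumes "s \<ge> 2" and "Pmax > 0" and "L > 0"
    and "h 0 > 0" and "\<And>k. k < s \<Longrightarrow> h k < h (k+1)"
    and "\<And>j. j \<le> s \<Longrightarrow> \<delta> j \<ge> 0" and "(\<Sum>j\<le>s. \<delta> j) = 1"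
    and "\<And>k. k \<in> {1..s-1} \<Longrightarrow>
           h (k+1) * beta h \<delta> k - h (k-1) * alpha h \<delta> k \<noteq> 0"
    and "\<And>k. k \<in> {1..s} \<Longrightarrow> ext Pmax s (rr h \<delta>) k < ext Pmax s (rr h \<delta>) (k-1)"
  shows "KKT L h \<delta> Pmax s (rr h \<delta>) (\<lambda>_. 0)
    \<and> (\<forall>I lam. KKT L h \<delta> Pmax s I lam \<longrightarrow>
          (\<forall>k\<in>{1..s-1}. I k = rr h \<delta> k) \<and> (\<forall>k\<in>{1..s}. lam k = 0))
    \<and> feasible Pmax s (rr h \<delta>)
    \<and> (\<forall>I. feasible Pmax s I \<longrightarrow>
          objective L h \<delta> Pmax s I \<le> objective L h \<delta> Pmax s (rr h \<delta>))
    \<and> (\<forall>I. feasible Pmax s I \<and>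
          (\<forall>I'. feasible Pmax s I' \<longrightarrow> objective L h \<delta> Pmax s I' \<le> objective L h \<delta> Pmax s I)
          \<longrightarrow> (\<forall>k\<in>{1..s-1}. I k = rr h \<delta> k))"
proof -
  interpret power_allocation s Pmax L h \<delta>
    using assms by unfold_locales auto
  have KKT_unique: "\<forall>I lam. KKT L h \<delta> Pmax s I lam \<longrightarrow>
      (\<forall>k\<in>{1..s-1}. I k = rr h \<delta> k) \<and> (\<forall>k\<in>{1..s}. lam k = 0)"
    using KKT_eq_rr KKT_multiplier_zero by blast
  have maximizer_unique: "\<forall>I. feasible Pmax s I \<and>
      (\<forall>I'. feasible Pmax s I' \<longrightarrow> objective L h \<delta> Pmax s I' \<le> objective L h \<delta> Pmax s I)
      \<longrightarrow> (\<forall>k\<in>{1..s-1}. I k = rr h \<delta> k)"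
    using maximizer_eq_rr feasible_rr by blast
  have rr_optimal: "\<forall>I. feasible Pmax s I \<longrightarrow> objective L h \<delta> Pmax s I \<le> objective L h \<delta> Pmax s (rr h \<delta>)"
    using objective_le_rr by blast
  show ?thesis
    by (intro conjI KKT_rr KKT_unique feasible_rr rr_optimal maximizer_unique)
qed

end
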